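(* Let $\Sigma$ be an alphabet with $|\Sigma|\ge3$ and $k\ge1$. A function $f\colon(\Sigma^* )^k\to\Sigma^*$ is congruence preserving if and only if there exist $n\in\mathbb{N}$, words $w_0,\ldots,w_n\in\Sigma^*$, exponents $p_1,\ldots,p_n\in\mathbb{N}$ and indices $i_1,\ldots,i_n\in\{1,\ldots,k\}$ such that for all $x_1,\ldots,x_k\in\Sigma^*$, $$f(x_1,\ldots,x_k)=w_0\,x_{i_1}^{p_1}\,w_1\,x_{i_2}^{p_2}\,w_2\cdots x_{i_n}^{p_n}\,w_n.$$
   Context: $\Sigma^*$ is the free monoid over $\Sigma$ (finite words, concatenation, empty word $\varepsilon$); $x^p$ denotes the concatenation of $p$ copies of $x$. A congruence on $\Sigma^*$ is an equivalence relation $\sim$ such that $u\sim v$ and $u'\sim v'$ imply $uu'\sim vv'$. A function $f\colon(\Sigma^* )^k\to\Sigma^*$ is congruence preserving if for every congruence $\sim$ on $\Sigma^*$ and all $u_1,\ldots,u_k,v_1,\ldots,v_k\in\Sigma^*$ with $u_i\sim v_i$ for all $i$, we have $f(u_1,\ldots,u_k)\sim f(v_1,\ldots,v_k)$. *)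

theory Defs
  imports Main
begin

definition congruence :: "('a list \<times> 'a list) set \<Rightarrow> bool" where
  "congruence R \<longleftrightarrow> equiv UNIV R \<and>
     (\<forall>u v u' v'. (u, v) \<in> R \<longrightarrow> (u', v') \<in> R \<longrightarrow> (u @ u', v @ v') \<in> R)"

text \<open>A k-ary function on words is represented as a function on lists of words;
  only argument lists of length k matter.\<close>
definition congruence_preserving :: "nat \<Rightarrow> ('a list list \<Rightarrow> 'a list) \<Rightarrow> bool" where
  "congruence_preserving k f \<longleftrightarrow>
     (\<forall>R us vs. congruence R \<longrightarrow> length us = k \<longrightarrow> length vs = k \<longrightarrow>
        (\<forall>i<k. (us ! i, vs ! i) \<in> R) \<longrightarrow> (f us, f vs) \<in> R)"

definition word_pow :: "'a list \<Rightarrow> nat \<Rightarrow> 'a list" where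
  "word_pow x p = concat (replicate p x)"

end

theory Submission
  imports Defs "HOL-Library.Sublist"
begin

text \<open>A congruence-preserving \<open>f\<close> preserves in particular the kernel of every endomorphism
  \<open>\<sigma>\<close> of \<open>\<Sigma>\<^sup>*\<close>, and only this is used. For a unary \<open>g\<close> with this property, the
  substitution of a word \<open>y\<close> for a letter \<open>t\<close> not occurring in \<open>y\<close> identifies \<open>g y\<close> with
  \<open>g [t]\<close>; combined with collapsing the alphabet to two letters and erasing a letter (both
  idempotent endomorphisms), and always keeping a third letter free, this shows that either
  \<open>g\<close> vanishes, or all values of \<open>g\<close> begin with one fixed letter, or \<open>g y\<close> begins with \<open>y\<close>.
  Changing the arguments of a \<open>k\<close>-ary \<open>f\<close> one at a time carries this trichotomy from
  single-letter arguments to all arguments. Stripping the detected first factor (an argument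
  or a letter) leaves a function of the same kind, and induction on the length of
  \<open>f (c, \<dots>, c)\<close> writes \<open>f\<close> as a concatenation of letters and arguments. Conversely,
  congruences are compatible with concatenation, hence with such expressions.\<close>

definition morph :: "('a \<Rightarrow> 'a list) \<Rightarrow> 'a list \<Rightarrow> 'a list" where
  "morph \<sigma> w = concat (map \<sigma> w)"

lemma morph_simps [simp]:
  "morph \<sigma> [] = []"
  "morph \<sigma> (x # w) = \<sigma> x @ morph \<sigma> w"
  "morph \<sigma> (u @ v) = morph \<sigma> u @ morph \<sigma> v"
  by (simp_all add: morph_def)

definition hom_compatible1 :: "('a list \<Rightarrow> 'a list) \<Rightarrow> bool" where
  "hom_compatible1 g \<longleftrightarrow>
     (\<forall>\<sigma> x y. morph \<sigma> x = morph \<sigma> y \<longrightarrow> morph \<sigma> (g x) = morph \<sigma> (g y))"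

definition hom_compatible :: "nat \<Rightarrow> ('a list list \<Rightarrow> 'a list) \<Rightarrow> bool" where
  "hom_compatible k f \<longleftrightarrow> (\<forall>\<sigma> xs ys. length xs = k \<longrightarrow> length ys = k \<longrightarrow>
     (\<forall>i<k. morph \<sigma> (xs ! i) = morph \<sigma> (ys ! i)) \<longrightarrow> morph \<sigma> (f xs) = morph \<sigma> (f ys))"

lemma congruence_morph_kernel: "congruence {(u, v). morph \<sigma> u = morph \<sigma> v}"
  unfolding congruence_def by (auto intro!: equivI refl_onI symI transI)

lemma congruence_preserving_imp_hom_compatible:
  "congruence_preserving k f \<Longrightarrow> hom_compatible k f"
  using congruence_morph_kernel unfolding congruence_preserving_def hom_compatible_def by fast

lemma hom_compatible_slice:
  "hom_compatible k f \<Longrightarrow> length xs = k \<Longrightarrow> i < k \<Longrightarrow> hom_compatible1 (\<lambda>y. f (xs[i := y]))"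
  unfolding hom_compatible_def hom_compatible1_def by (auto simp: nth_list_update)

lemma hom_compatible_nth: "i < k \<Longrightarrow> hom_compatible k (\<lambda>xs. xs ! i)"
  unfolding hom_compatible_def by blast

lemma hom_compatible_const: "hom_compatible k (\<lambda>_. w)"
  unfolding hom_compatible_def by blast

lemma hom_compatible_cancel_left:
  assumes f: "hom_compatible k f" and h: "hom_compatible k h"
    and split: "\<And>xs. length xs = k \<Longrightarrow> f xs = h xs @ f' xs"
  shows "hom_compatible k f'"
  unfolding hom_compatible_def
proof (intro allI impI)
  fix \<sigma> and xs ys :: "'a list list"
  assume "length xs = k" "length ys = k" "\<forall>i<k. morph \<sigma> (xs ! i) = morph \<sigma> (ys ! i)"
  then have "morph \<sigma> (f xs) = morph \<sigma> (f ys)" "morph \<sigma> (h xs) = morph \<sigma> (h ys)"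
    using f h unfolding hom_compatible_def by blast+
  then show "morph \<sigma> (f' xs) = morph \<sigma> (f' ys)"
    using split \<open>length xs = k\<close> \<open>length ys = k\<close> by simp
qed

lemma hom_compatible1_retract:
  "hom_compatible1 g \<Longrightarrow> morph \<sigma> (morph \<sigma> y) = morph \<sigma> y \<Longrightarrow>
     morph \<sigma> (g (morph \<sigma> y)) = morph \<sigma> (g y)"
  unfolding hom_compatible1_def by blast

definition collapse :: "'a \<Rightarrow> 'a \<Rightarrow> 'a list \<Rightarrow> 'a list" where
  "collapse c d = map (\<lambda>x. if x = c then c else d)"

definition erase :: "'a \<Rightarrow> 'a list \<Rightarrow> 'a list" where
  "erase c = filter (\<lambda>x. x \<noteq> c)"

definition subst_letter :: "'a \<Rightarrow> 'a list \<Rightarrow> 'a list \<Rightarrow> 'a list" where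
  "subst_letter t A = morph (\<lambda>x. if x = t then A else [x])"

lemma collapse_eq_morph: "collapse c d = morph (\<lambda>x. [if x = c then c else d])"
  by (rule ext, induct_tac x) (auto simp: collapse_def)

lemma erase_eq_morph: "erase c = morph (\<lambda>x. if x = c then [] else [x])"
  by (rule ext, induct_tac x) (auto simp: erase_def)

lemma collapse_idem [simp]: "collapse c d (collapse c d y) = collapse c d y"
  by (induct y) (auto simp: collapse_def)

lemma erase_idem [simp]: "erase c (erase c y) = erase c y"
  by (simp add: erase_def)

lemma subst_letter_simps [simp]:
  "subst_letter t A [] = []"
  "subst_letter t A (x # w) = (if x = t then A else [x]) @ subst_letter t A w"
  by (simp_all add: subst_letter_def)

lemma subst_letter_fresh: "t \<notin> set y \<Longrightarrow> subst_letter t A y = y"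
  by (induct y) auto

lemma hom_compatible1_collapse:
  "hom_compatible1 g \<Longrightarrow> collapse c d (g (collapse c d y)) = collapse c d (g y)"
  using hom_compatible1_retract[of g "\<lambda>x. [if x = c then c else d]" y] collapse_idem[of c d y]
  unfolding collapse_eq_morph by blast

lemma hom_compatible1_erase:
  "hom_compatible1 g \<Longrightarrow> erase c (g (erase c y)) = erase c (g y)"
  using hom_compatible1_retract[of g "\<lambda>x. if x = c then [] else [x]" y] erase_idem[of c y]
  unfolding erase_eq_morph by blast

lemma hom_compatible1_subst_letter:
  assumes "hom_compatible1 g" "t \<notin> set y"
  shows "subst_letter t y (g y) = subst_letter t y (g [t])"
proof -
  have "subst_letter t y y = subst_letter t y [t]"
    using subst_letter_fresh[OF assms(2)] by simp
  with assms(1) show ?thesis unfolding hom_compatible1_def subst_letter_def by blast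
qed

lemma prefix_of_two_substs:
  "prefix v (subst_letter t A z) \<Longrightarrow> prefix v (subst_letter u B z) \<Longrightarrow>
     t \<notin> set v \<Longrightarrow> u \<notin> set v \<Longrightarrow> t \<noteq> u \<Longrightarrow> prefix v z"
proof (induct z arbitrary: v)
  case (Cons a z)
  show ?case
  proof (cases v)
    case (Cons b v')
    show ?thesis
    proof (cases "a = t \<or> a = u")
      case True
      then show ?thesis using Cons.prems \<open>v = b # v'\<close> by (auto split: if_splits)
    next
      case False
      then have "prefix v' (subst_letter t A z)" "prefix v' (subst_letter u B z)" "b = a"
        using Cons.prems \<open>v = b # v'\<close> by auto
      then show ?thesis using Cons.hyps Cons.prems \<open>v = b # v'\<close> by auto
    qed
  qed simp
qed simp

lemma prefix_of_collapse_and_subst: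
  "prefix (collapse t d v) (collapse t d z) \<Longrightarrow> prefix v (subst_letter t A z) \<Longrightarrow>
     t \<notin> set v \<Longrightarrow> d \<noteq> t \<Longrightarrow> prefix v z"
proof (induct z arbitrary: v)
  case (Cons a z)
  show ?case
  proof (cases v)
    case (Cons b v')
    show ?thesis
    proof (cases "a = t")
      case True
      then show ?thesis using Cons.prems \<open>v = b # v'\<close> by (auto simp: collapse_def split: if_splits)
    next
      case False
      then have "prefix v' (subst_letter t A z)" "b = a" "prefix (collapse t d v') (collapse t d z)"
        using Cons.prems \<open>v = b # v'\<close> by (auto simp: collapse_def)
      then show ?thesis using Cons.hyps Cons.prems \<open>v = b # v'\<close> by auto
    qed
  qed simp
qed (simp add: collapse_def)

lemma prefix_of_collapse_and_erase:
  "prefix (collapse c d v) (collapse c d z) \<Longrightarrow> prefix (erase c v) (erase c z) \<Longrightarrow>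
     d \<noteq> c \<Longrightarrow> prefix v z"
proof (induct z arbitrary: v)
  case (Cons a z)
  show ?case
  proof (cases v)
    case (Cons b v')
    show ?thesis
    proof (cases "a = c")
      case True
      then show ?thesis using Cons.prems Cons.hyps \<open>v = b # v'\<close>
        by (auto simp: collapse_def erase_def split: if_splits)
    next
      case False
      then show ?thesis using Cons.prems Cons.hyps \<open>v = b # v'\<close>
        by (auto simp: collapse_def erase_def split: if_splits)
    qed
  qed simp
qed (simp add: collapse_def)

lemma hom_compatible1_Nil_at_fresh:
  assumes g: "hom_compatible1 g" and e: "g [e] = []" "e \<notin> set y" and y: "y \<noteq> []"
  shows "g y = []"
proof -
  have "subst_letter e y (g y) = []"
    using hom_compatible1_subst_letter[OF g e(2)] e(1) by simp
  then show ?thesis using y by (cases "g y") (auto split: if_splits)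
qed

lemma list_update_towards_induct:
  assumes R: "length R = k" and base: "P R"
    and step: "\<And>xs n. length xs = k \<Longrightarrow> n < k \<Longrightarrow> P (xs[n := R ! n]) \<Longrightarrow> P xs"
    and xs: "length xs = k"
  shows "P xs"
proof -
  have "P xs" if "length xs = k" "\<forall>j. n \<le> j \<longrightarrow> j < k \<longrightarrow> xs ! j = R ! j" for n xs
    using that
  proof (induct n arbitrary: xs)
    case 0
    then have "xs = R" using R by (auto intro: nth_equalityI)
    then show ?case using base by simp
  next
    case (Suc n)
    show ?case
    proof (cases "n < k")
      case True
      have "P (xs[n := R ! n])"
        using Suc by (intro Suc.hyps) (auto simp: nth_list_update not_less_eq_eq)
      then show ?thesis using step Suc.prems True by blast
    next
      case False
      then show ?thesis using Suc by auto
    qed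
  qed
  from this[of xs k] show ?thesis using xs by simp
qed

lemma hom_compatible_transfer:
  assumes f: "hom_compatible k f" and R: "length R = k" "\<forall>j<k. \<exists>c. R ! j = [c] \<and> Q c"
    and step: "\<And>g c y. hom_compatible1 g \<Longrightarrow> Q c \<Longrightarrow> P (g [c]) \<Longrightarrow> P (g y)"
    and base: "P (f R)" and xs: "length xs = k"
  shows "P (f xs)"
  using R(1) base _ xs
proof (rule list_update_towards_induct)
  fix xs n
  assume xs: "length xs = k" and n: "n < k" and P: "P (f (xs[n := R ! n]))"
  obtain c where "R ! n = [c]" "Q c" using R(2) n by blast
  with step[OF hom_compatible_slice[OF f xs n], of c "xs ! n"] P show "P (f xs)" by simp
qed

definition pattern_word :: "('a + nat) list \<Rightarrow> 'a list list \<Rightarrow> 'a list" where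
  "pattern_word as xs = concat (map (\<lambda>a. case a of Inl s \<Rightarrow> [s] | Inr i \<Rightarrow> xs ! i) as)"

lemma pattern_word_simps [simp]:
  "pattern_word [] xs = []"
  "pattern_word (Inl s # as) xs = s # pattern_word as xs"
  "pattern_word (Inr i # as) xs = xs ! i @ pattern_word as xs"
  by (simp_all add: pattern_word_def)

definition two_letter_args :: "nat \<Rightarrow> 'a \<Rightarrow> 'a \<Rightarrow> nat \<Rightarrow> 'a list list" where
  "two_letter_args k t d m = map (\<lambda>j. if j < m then [t] else [d]) [0..<k]"

lemma two_letter_args_letters:
  "length (two_letter_args k t d m) = k"
  "\<forall>j<k. \<exists>c. two_letter_args k t d m ! j = [c]"
  by (auto simp: two_letter_args_def)

context
  assumes third: "\<And>x y::'a. \<exists>z. z \<noteq> x \<and> z \<noteq> y"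
begin

lemma id_or_const_if_rename_invariant:
  fixes \<phi> :: "'a \<Rightarrow> 'a"
  assumes rename: "\<And>t t'. t \<noteq> t' \<Longrightarrow>
      (if \<phi> t' = t' then t else \<phi> t') = (if \<phi> t = t' then t else \<phi> t)"
  shows "\<phi> = id \<or> (\<exists>s. \<phi> = (\<lambda>_. s))"
proof (cases "\<forall>t. \<phi> t = t")
  case True
  then show ?thesis by auto
next
  case False
  then obtain t where t: "\<phi> t \<noteq> t" by blast
  define s where "s = \<phi> t"
  have off: "\<phi> u = s" if "u \<noteq> t" "u \<noteq> s" for u
    using rename[of t u] that t s_def by (auto split: if_splits)
  have "\<phi> s = s"
  proof -
    have "\<phi> s = s \<or> \<phi> s = t" using rename[of t s] t s_def by (auto split: if_splits)
    moreover obtain v where v: "v \<noteq> s" "v \<noteq> t" using third[of s t] by blast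
    moreover have "\<phi> v = s" using off v by blast
    ultimately show ?thesis using rename[of v s] t s_def by (auto split: if_splits)
  qed
  then have "\<phi> = (\<lambda>_. s)" using off s_def by metis
  then show ?thesis by blast
qed

lemma hom_compatible1_Nil:
  fixes g :: "'a list \<Rightarrow> 'a list"
  assumes g: "hom_compatible1 g" and c: "g [c] = []"
  shows "g y = []"
proof -
  obtain d where d: "d \<noteq> c" using third[of c c] by blast
  obtain e where e: "e \<noteq> c" "e \<noteq> d" using third[of c d] by blast
  have gd: "g [d] = []" and ge: "g [e] = []"
    using hom_compatible1_Nil_at_fresh[OF g c] d e by auto
  have "erase c (g []) = []" and "erase d (g []) = []"
    using hom_compatible1_erase[OF g, of c "[c]"] hom_compatible1_erase[OF g, of d "[d]"] c gd
    by (simp_all add: erase_def)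
  then have "\<forall>x\<in>set (g []). x = c \<and> x = d" by (auto simp: erase_def filter_empty_conv)
  then have g0: "g [] = []" using d by (cases "g []") auto
  have "g (collapse c d y) = []"
  proof (cases "collapse c d y = []")
    case False
    have "e \<notin> set (collapse c d y)" using e by (auto simp: collapse_def)
    then show ?thesis using hom_compatible1_Nil_at_fresh[OF g ge _ False] by simp
  qed (simp add: g0)
  then have "collapse c d (g y) = []" using hom_compatible1_collapse[OF g, of c d y] by (simp add: collapse_def)
  then show ?thesis by (simp add: collapse_def)
qed

lemma hom_compatible1_prefix_self:
  fixes g :: "'a list \<Rightarrow> 'a list"
  assumes g: "hom_compatible1 g" and head: "\<And>t. \<exists>r. g [t] = t # r"
  shows "prefix y (g y)"
proof -
  have subst_prefix: "prefix y (subst_letter t y (g y))" if "t \<notin> set y" for t y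
    using hom_compatible1_subst_letter[OF g that] head[of t] by auto
  have avoiding_two: "prefix y (g y)" if "t \<notin> set y" "u \<notin> set y" "t \<noteq> u" for t u y
    using prefix_of_two_substs[OF subst_prefix[OF that(1)] subst_prefix[OF that(2)] that] .
  have avoiding_one: "prefix y (g y)" if t: "t \<notin> set y" for t y
  proof -
    obtain d where d: "d \<noteq> t" using third[of t t] by blast
    obtain e where e: "e \<noteq> t" "e \<noteq> d" using third[of t d] by blast
    have "t \<notin> set (collapse t d y)" "e \<notin> set (collapse t d y)" using t d e by (auto simp: collapse_def)
    then have "prefix (collapse t d y) (g (collapse t d y))" using avoiding_two e by blast
    then have "prefix (collapse t d (collapse t d y)) (collapse t d (g (collapse t d y)))"
      unfolding collapse_def by (rule map_mono_prefix)
    then have "prefix (collapse t d y) (collapse t d (g y))" using hom_compatible1_collapse[OF g] by simp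
    then show ?thesis using prefix_of_collapse_and_subst[OF _ subst_prefix[OF t] t d] by blast
  qed
  obtain c d where cd: "c \<noteq> (d::'a)" using third[of undefined undefined] by blast
  obtain e where e: "e \<noteq> c" "e \<noteq> d" using third[of c d] by blast
  have "e \<notin> set (collapse c d y)" using e by (auto simp: collapse_def)
  then have "prefix (collapse c d y) (g (collapse c d y))" by (rule avoiding_one)
  then have "prefix (collapse c d (collapse c d y)) (collapse c d (g (collapse c d y)))"
    unfolding collapse_def by (rule map_mono_prefix)
  then have collapsed: "prefix (collapse c d y) (collapse c d (g y))"
    using hom_compatible1_collapse[OF g] by simp
  have "prefix (erase c y) (g (erase c y))" by (rule avoiding_one[of c]) (simp add: erase_def)
  then have "prefix (erase c (erase c y)) (erase c (g (erase c y)))"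
    unfolding erase_def by (rule filter_mono_prefix)
  then have erased: "prefix (erase c y) (erase c (g y))" using hom_compatible1_erase[OF g] by simp
  show ?thesis using prefix_of_collapse_and_erase[OF collapsed erased] cd by blast
qed

lemma hom_compatible1_const_head:
  fixes g :: "'a list \<Rightarrow> 'a list"
  assumes g: "hom_compatible1 g" and head: "\<And>t. \<exists>r. g [t] = s # r"
  shows "\<exists>r. g y = s # r"
proof -
  have avoiding_one: "g y \<noteq> [] \<and> (\<forall>a r. g y = a # r \<longrightarrow> a = t \<or> a = s)"
    if t: "t \<notin> set y" "t \<noteq> s" for t y
  proof -
    obtain r where "g [t] = s # r" using head by blast
    then have "subst_letter t y (g y) = s # subst_letter t y r"
      using hom_compatible1_subst_letter[OF g t(1)] t(2) by simp
    then show ?thesis by (cases "g y") (auto split: if_splits)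
  qed
  have avoiding_two: "\<exists>r. g y = s # r"
    if "t \<notin> set y" "t \<noteq> s" "u \<notin> set y" "u \<noteq> s" "t \<noteq> u" for t u y
    using avoiding_one[OF that(1,2)] avoiding_one[OF that(3,4)] that(5) by (cases "g y") auto
  have avoiding_other: "\<exists>r. g y = s # r" if t: "t \<notin> set y" "t \<noteq> s" for t y
  proof -
    obtain e where e: "e \<noteq> t" "e \<noteq> s" using third[of t s] by blast
    have "t \<notin> set (collapse t s y)" "e \<notin> set (collapse t s y)" using t e by (auto simp: collapse_def)
    then obtain r where r: "g (collapse t s y) = s # r" using avoiding_two e t by metis
    have "collapse t s (g y) = collapse t s (g (collapse t s y))"
      using hom_compatible1_collapse[OF g] by simp
    also have "\<dots> = s # collapse t s r" using r t by (simp add: collapse_def)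
    finally obtain a r' where "g y = a # r'" "a \<noteq> t"
      using t(2) by (cases "g y") (auto simp: collapse_def split: if_splits)
    then show ?thesis using avoiding_one[OF t] by blast
  qed
  obtain d where d: "d \<noteq> s" using third[of s s] by blast
  obtain t where t: "t \<noteq> s" "t \<noteq> d" using third[of s d] by blast
  have "t \<notin> set (collapse s d y)" using t by (auto simp: collapse_def)
  then obtain r where r: "g (collapse s d y) = s # r" using avoiding_other t by metis
  have "collapse s d (g y) = collapse s d (g (collapse s d y))"
    using hom_compatible1_collapse[OF g] by simp
  also have "\<dots> = s # collapse s d r" using r by (simp add: collapse_def)
  finally show ?thesis using d by (cases "g y") (auto simp: collapse_def split: if_splits)
qed

lemma hom_compatible1_trichotomy:
  fixes g :: "'a list \<Rightarrow> 'a list"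
  assumes g: "hom_compatible1 g"
  shows "(\<forall>y. g y = []) \<or> (\<exists>s. \<forall>y. \<exists>r. g y = s # r) \<or> (\<forall>y. prefix y (g y))"
proof (cases "\<exists>c. g [c] = []")
  case True
  then show ?thesis using hom_compatible1_Nil[OF g] by blast
next
  case False
  define \<phi> where "\<phi> t = hd (g [t])" for t
  have head: "g [t] = \<phi> t # tl (g [t])" for t
    using False unfolding \<phi>_def by (metis list.collapse)
  have hd_subst: "hd (subst_letter t' [t] z) = (if hd z = t' then t else hd z)"
    if "z \<noteq> []" for z :: "'a list" and t t'
    using that by (cases z) auto
  have "(if \<phi> t' = t' then t else \<phi> t') = (if \<phi> t = t' then t else \<phi> t)" if "t \<noteq> t'" for t t'
  proof -
    \<comment> \<open>The substitution \<open>t' \<mapsto> t\<close> identifies \<open>[t']\<close> with \<open>[t]\<close>, hence the first letters of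
      the images of \<open>g [t']\<close> and \<open>g [t]\<close>.\<close>
    have "subst_letter t' [t] (g [t']) = subst_letter t' [t] (g [t])"
      using hom_compatible1_subst_letter[OF g, of t' "[t]"] that by simp
    then show ?thesis using hd_subst False unfolding \<phi>_def by metis
  qed
  from id_or_const_if_rename_invariant[OF this] show ?thesis
  proof
    assume "\<phi> = id"
    then have "\<And>t. \<exists>r. g [t] = t # r" using head by (metis id_apply)
    then show ?thesis using hom_compatible1_prefix_self[OF g] by blast
  next
    assume "\<exists>s. \<phi> = (\<lambda>_. s)"
    then obtain s where "\<And>t. \<exists>r. g [t] = s # r" using head by metis
    then show ?thesis using hom_compatible1_const_head[OF g] by blast
  qed
qed

lemma hom_compatible1_head_letter:
  fixes g :: "'a list \<Rightarrow> 'a list"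
  assumes "hom_compatible1 g" "g [c] = v # r" "v \<noteq> c"
  shows "\<exists>r'. g y = v # r'"
  using hom_compatible1_trichotomy[OF assms(1)] assms(2,3)
  by (metis list.distinct(1) list.inject prefix_Cons)

lemma hom_compatible1_prefix_of_two_letters:
  fixes g :: "'a list \<Rightarrow> 'a list"
  assumes "hom_compatible1 g" "g [u] = u # r" "g [u'] = u' # r'" "u \<noteq> u'"
  shows "prefix y (g y)"
  using hom_compatible1_trichotomy[OF assms(1)] assms(2-4) by (metis list.distinct(1) list.inject)

lemma hom_compatible_arg_prefix:
  fixes f :: "'a list list \<Rightarrow> 'a list"
  assumes f: "hom_compatible k f" and R: "length R = k" "\<forall>j<k. \<exists>c. R ! j = [c]" and i: "i < k"
    and base: "\<And>y. prefix y (f (R[i := y]))" and xs: "length xs = k"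
  shows "prefix (xs ! i) (f xs)"
proof -
  have "\<forall>y. prefix y (f (xs[i := y]))"
    using R(1) _ _ xs
  proof (rule list_update_towards_induct)
    show "\<forall>y. prefix y (f (R[i := y]))" using base by blast
  next
    fix xs n
    assume xs: "length xs = k" and n: "n < k" and IH: "\<forall>y. prefix y (f (xs[n := R ! n, i := y]))"
    show "\<forall>y. prefix y (f (xs[i := y]))"
    proof (cases "n = i")
      case True
      then show ?thesis using IH by simp
    next
      case False
      obtain c where c: "R ! n = [c]" using R(2) n by blast
      have head: "\<exists>r. f (xs[i := [v]]) = v # r" if "v \<noteq> c" for v
      proof -
        have "prefix [v] (f (xs[i := [v], n := [c]]))"
          using IH c False by (metis list_update_swap)
        then obtain r where "f (xs[i := [v], n := [c]]) = v # r" by (auto simp: prefix_def)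
        from hom_compatible1_head_letter[OF hom_compatible_slice[OF f _ n] this that, of "xs ! n"]
        show ?thesis using xs False by (simp add: list_update_swap[of i n])
      qed
      obtain u where u: "u \<noteq> c" using third[of c c] by blast
      obtain u' where u': "u' \<noteq> c" "u' \<noteq> u" using third[of c u] by blast
      obtain r r' where "f (xs[i := [u]]) = u # r" "f (xs[i := [u']]) = u' # r'"
        using head u u' by blast
      with hom_compatible1_prefix_of_two_letters[OF hom_compatible_slice[OF f xs i]] u'
      show ?thesis by blast
    qed
  qed
  then show ?thesis by (metis list_update_id)
qed

lemma hom_compatible_Nil_transfer:
  fixes f :: "'a list list \<Rightarrow> 'a list"
  assumes "hom_compatible k f" "length R = k" "\<forall>j<k. \<exists>c. R ! j = [c]" "f R = []" "length xs = k"
  shows "f xs = []"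
  by (rule hom_compatible_transfer[where Q = "\<lambda>_. True" and P = "\<lambda>w. w = []",
        OF assms(1,2) _ _ assms(4,5)])
    (use assms(3) in blast, use hom_compatible1_Nil in blast)

lemma hom_compatible_head_transfer:
  fixes f :: "'a list list \<Rightarrow> 'a list"
  assumes "hom_compatible k f" "length R = k" "\<forall>j<k. \<exists>c. R ! j = [c] \<and> c \<noteq> a"
    and "f R = a # r" "length xs = k"
  shows "\<exists>r. f xs = a # r"
  by (rule hom_compatible_transfer[where Q = "\<lambda>c. c \<noteq> a" and P = "\<lambda>w. \<exists>r. w = a # r",
        OF assms(1-3) _ _ assms(5)])
    (use hom_compatible1_head_letter in blast, use assms(4) in blast)

lemma hom_compatible_head_two_letter_args:
  fixes f :: "'a list list \<Rightarrow> 'a list"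
  assumes f: "hom_compatible k f"
    and no_prefix: "\<not> (\<exists>i<k. \<forall>xs. length xs = k \<longrightarrow> prefix (xs ! i) (f xs))"
    and start: "f (two_letter_args k t d 0) = d # r" and m: "m \<le> k"
  shows "\<exists>r. f (two_letter_args k t d m) = d # r"
  using m
proof (induct m)
  case (Suc m)
  let ?T = "two_letter_args k t d"
  obtain r where r: "f (?T m) = d # r" using Suc by auto
  have m: "m < k" using Suc.prems by simp
  define g where "g y = f ((?T m)[m := y])" for y
  have g: "hom_compatible1 g"
    unfolding g_def using hom_compatible_slice[OF f two_letter_args_letters(1) m] .
  have "(?T m)[m := [d]] = ?T m" "(?T m)[m := [t]] = ?T (Suc m)"
    by (rule nth_equalityI; use m in \<open>simp add: two_letter_args_def nth_list_update\<close>)+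
  then have gd: "g [d] = d # r" and gt: "g [t] = f (?T (Suc m))" using r by (simp_all add: g_def)
  from hom_compatible1_trichotomy[OF g] show ?case
  proof (elim disjE)
    assume "\<forall>y. g y = []"
    then show ?thesis using gd by simp
  next
    assume "\<exists>s. \<forall>y. \<exists>r. g y = s # r"
    then show ?thesis using gd gt by (metis list.inject)
  next
    assume "\<forall>y. prefix y (g y)"
    then have "\<forall>xs. length xs = k \<longrightarrow> prefix (xs ! m) (f xs)"
      using hom_compatible_arg_prefix[OF f two_letter_args_letters m] unfolding g_def by blast
    then show ?thesis using no_prefix m by blast
  qed
qed (use start in simp)

lemma hom_compatible_trichotomy:
  fixes f :: "'a list list \<Rightarrow> 'a list"
  assumes f: "hom_compatible k f"
  shows "(\<exists>i<k. \<forall>xs. length xs = k \<longrightarrow> prefix (xs ! i) (f xs)) \<or>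
    (\<exists>s. \<forall>xs. length xs = k \<longrightarrow> (\<exists>r. f xs = s # r)) \<or> (\<forall>xs. length xs = k \<longrightarrow> f xs = [])"
proof -
  obtain d t :: 'a where t: "t \<noteq> d" using third[of undefined undefined] by blast
  let ?T = "two_letter_args k t d"
  consider "f (?T 0) = []" | a r where "f (?T 0) = a # r" "a \<noteq> d" | r where "f (?T 0) = d # r"
    by (cases "f (?T 0)") auto
  then show ?thesis
  proof cases
    case 1
    then show ?thesis using hom_compatible_Nil_transfer[OF f two_letter_args_letters] by blast
  next
    case (2 a r)
    have "\<forall>j<k. \<exists>c. ?T 0 ! j = [c] \<and> c \<noteq> a" using 2(2) by (simp add: two_letter_args_def)
    then show ?thesis
      using hom_compatible_head_transfer[OF f two_letter_args_letters(1) _ 2(1)] by blast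
  next
    case (3 r)
    \<comment> \<open>Unless some argument is a prefix of all values, the first letter stays \<open>d\<close> while the
      arguments are switched from \<open>[d]\<close> to \<open>[t]\<close> one by one.\<close>
    show ?thesis
    proof (cases "\<exists>i<k. \<forall>xs. length xs = k \<longrightarrow> prefix (xs ! i) (f xs)")
      case False
      from hom_compatible_head_two_letter_args[OF f False 3] obtain r' where "f (?T k) = d # r'"
        by blast
      moreover have "\<forall>j<k. \<exists>c. ?T k ! j = [c] \<and> c \<noteq> d" using t by (simp add: two_letter_args_def)
      ultimately show ?thesis using hom_compatible_head_transfer[OF f two_letter_args_letters(1)] by blast
    qed blast
  qed
qed

lemma hom_compatible_imp_pattern_word:
  fixes f :: "'a list list \<Rightarrow> 'a list"
  assumes f: "hom_compatible k f"
  shows "\<exists>as. (\<forall>i. Inr i \<in> set as \<longrightarrow> i < k) \<and> (\<forall>xs. length xs = k \<longrightarrow> f xs = pattern_word as xs)"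
proof -
  fix c :: 'a
  show ?thesis using f
  proof (induct "length (f (replicate k [c]))" arbitrary: f rule: less_induct)
    case less
    note f = less.prems
    from hom_compatible_trichotomy[OF f] show ?case
    proof (elim disjE exE conjE)
      fix i assume i: "i < k" and prefix: "\<forall>xs. length xs = k \<longrightarrow> prefix (xs ! i) (f xs)"
      define f' where "f' xs = drop (length (xs ! i)) (f xs)" for xs
      have split: "f xs = xs ! i @ f' xs" if "length xs = k" for xs
        using prefix that unfolding f'_def prefix_def by auto
      have "hom_compatible k f'" by (rule hom_compatible_cancel_left[OF f hom_compatible_nth[OF i] split])
      moreover have "length (f' (replicate k [c])) < length (f (replicate k [c]))"
        using split[of "replicate k [c]"] i by simp
      ultimately obtain as where "\<forall>i. Inr i \<in> set as \<longrightarrow> i < k"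
        "\<forall>xs. length xs = k \<longrightarrow> f' xs = pattern_word as xs"
        using less.hyps by blast
      then show ?thesis using i split by (intro exI[of _ "Inr i # as"]) auto
    next
      fix s assume head: "\<forall>xs. length xs = k \<longrightarrow> (\<exists>r. f xs = s # r)"
      define f' where "f' xs = tl (f xs)" for xs
      have split: "f xs = [s] @ f' xs" if "length xs = k" for xs
        using head that unfolding f'_def by auto
      have "hom_compatible k f'" by (rule hom_compatible_cancel_left[OF f hom_compatible_const split])
      moreover have "length (f' (replicate k [c])) < length (f (replicate k [c]))"
        using split[of "replicate k [c]"] by simp
      ultimately obtain as where "\<forall>i. Inr i \<in> set as \<longrightarrow> i < k"
        "\<forall>xs. length xs = k \<longrightarrow> f' xs = pattern_word as xs"
        using less.hyps by blast
      then show ?thesis using split by (intro exI[of _ "Inl s # as"]) auto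
    next
      assume "\<forall>xs. length xs = k \<longrightarrow> f xs = []"
      then show ?thesis by (intro exI[of _ "[]"]) simp
    qed
  qed
qed

end

lemma pattern_word_factorization:
  assumes k: "0 < k" and as: "\<forall>i. Inr i \<in> set as \<longrightarrow> i < k"
    and f: "\<forall>xs. length xs = k \<longrightarrow> f xs = pattern_word as xs"
  shows "\<exists>(n::nat) (w::nat \<Rightarrow> 'a list) (p::nat \<Rightarrow> nat) (idx::nat \<Rightarrow> nat).
    (\<forall>j\<in>{1..n}. idx j < k) \<and>
    (\<forall>xs. length xs = k \<longrightarrow>
       f xs = w 0 @ concat (map (\<lambda>j. word_pow (xs ! idx j) (p j) @ w j) [1..<Suc n]))"
proof -
  \<comment> \<open>A letter \<open>s\<close> of the pattern becomes the factor \<open>x\<^sub>0\<^sup>0 s\<close> (hence \<open>0 < k\<close>), a variable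
    \<open>x\<^sub>i\<close> the factor \<open>x\<^sub>i\<^sup>1\<close>.\<close>
  define w where "w j = (if j = 0 then [] else case as ! (j - 1) of Inl s \<Rightarrow> [s] | Inr _ \<Rightarrow> [])" for j
  define p :: "nat \<Rightarrow> nat" where "p j = (case as ! (j - 1) of Inl _ \<Rightarrow> 0 | Inr _ \<Rightarrow> 1)" for j
  define idx where "idx j = (case as ! (j - 1) of Inl _ \<Rightarrow> 0 | Inr i \<Rightarrow> i)" for j
  have "idx j < k" if "j \<in> {1..length as}" for j
  proof (cases "as ! (j - 1)")
    case (Inr i)
    moreover have "as ! (j - 1) \<in> set as" using that by auto
    ultimately show ?thesis using as by (simp add: idx_def)
  qed (simp add: idx_def k)
  moreover have "map (\<lambda>j. word_pow (xs ! idx j) (p j) @ w j) [1..<Suc (length as)] =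
      map (\<lambda>a. case a of Inl s \<Rightarrow> [s] | Inr i \<Rightarrow> xs ! i) as" for xs :: "'a list list"
  proof -
    have "[1..<Suc (length as)] = map Suc [0..<length as]" by (simp add: map_Suc_upt)
    then have "map (\<lambda>j. word_pow (xs ! idx j) (p j) @ w j) [1..<Suc (length as)] =
        map (\<lambda>j. case as ! j of Inl s \<Rightarrow> [s] | Inr i \<Rightarrow> xs ! i) [0..<length as]"
      by (auto simp: w_def p_def idx_def word_pow_def split: sum.split)
    also have "\<dots> = map (\<lambda>a. case a of Inl s \<Rightarrow> [s] | Inr i \<Rightarrow> xs ! i) as"
      by (subst (2) map_nth[symmetric]) simp
    finally show ?thesis .
  qed
  ultimately show ?thesis using f unfolding pattern_word_def
    by (intro exI[of _ "length as"] exI[of _ w] exI[of _ p] exI[of _ idx]) (simp add: w_def)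
qed

lemma congruence_refl: "congruence R \<Longrightarrow> (x, x) \<in> R"
  unfolding congruence_def equiv_def refl_on_def by blast

lemma congruence_append: "congruence R \<Longrightarrow> (u, v) \<in> R \<Longrightarrow> (u', v') \<in> R \<Longrightarrow> (u @ u', v @ v') \<in> R"
  unfolding congruence_def by blast

lemma congruence_word_pow: "congruence R \<Longrightarrow> (u, v) \<in> R \<Longrightarrow> (word_pow u p, word_pow v p) \<in> R"
  by (induct p) (simp_all add: word_pow_def congruence_refl congruence_append)

lemma congruence_concat_map:
  "congruence R \<Longrightarrow> \<forall>j\<in>set js. (F j, G j) \<in> R \<Longrightarrow> (concat (map F js), concat (map G js)) \<in> R"
  by (induct js) (simp_all add: congruence_refl congruence_append)

lemma factorization_imp_congruence_preserving:
  assumes idx: "\<forall>j\<in>{1..n}. idx j < k"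
    and f: "\<forall>xs. length xs = k \<longrightarrow>
       f xs = w 0 @ concat (map (\<lambda>j. word_pow (xs ! idx j) (p j) @ w j) [1..<Suc n])"
  shows "congruence_preserving k f"
  unfolding congruence_preserving_def
proof (intro allI impI)
  fix R and us vs :: "'a list list"
  assume R: "congruence R" and len: "length us = k" "length vs = k"
    and uv: "\<forall>i<k. (us ! i, vs ! i) \<in> R"
  have "\<forall>j\<in>set [1..<Suc n].
      (word_pow (us ! idx j) (p j) @ w j, word_pow (vs ! idx j) (p j) @ w j) \<in> R"
    using idx uv by (auto intro!: congruence_append congruence_word_pow congruence_refl R)
  from congruence_concat_map[OF R this] show "(f us, f vs) \<in> R"
    using f len by (simp add: congruence_append congruence_refl R)
qed

lemma ex_third_if_card_ge_3:
  assumes "3 \<le> card (UNIV :: 'a set)"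
  shows "\<exists>z::'a. z \<noteq> x \<and> z \<noteq> y"
proof (rule ccontr)
  assume "\<nexists>z. z \<noteq> x \<and> z \<noteq> y"
  then have "UNIV = {x, y}" by blast
  moreover have "card {x, y} \<le> 2" by (simp add: card_insert_le_m1)
  ultimately show False using assms by simp
qed

theorem mainTheorem19:
  fixes f :: "('a::finite) list list \<Rightarrow> 'a list" and k :: nat
  assumes "card (UNIV :: 'a set) \<ge> 3" and "k \<ge> 1"
  shows "congruence_preserving k f \<longleftrightarrow>
    (\<exists>(n::nat) (w::nat \<Rightarrow> 'a list) (p::nat \<Rightarrow> nat) (idx::nat \<Rightarrow> nat).
       (\<forall>j\<in>{1..n}. idx j < k) \<and>
       (\<forall>xs. length xs = k \<longrightarrow>
          f xs = w 0 @ concat (map (\<lambda>j. word_pow (xs ! idx j) (p j) @ w j) [1..<Suc n])))"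
    (is "_ \<longleftrightarrow> ?factorization")
proof
  assume "congruence_preserving k f"
  then have "hom_compatible k f" by (rule congruence_preserving_imp_hom_compatible)
  with ex_third_if_card_ge_3[OF assms(1)] obtain as where
    "\<forall>i. Inr i \<in> set as \<longrightarrow> i < k" "\<forall>xs. length xs = k \<longrightarrow> f xs = pattern_word as xs"
    using hom_compatible_imp_pattern_word by blast
  with assms(2) show ?factorization by (intro pattern_word_factorization) auto
next
  assume ?factorization
  then show "congruence_preserving k f"
    by (elim exE conjE) (rule factorization_imp_congruence_preserving)
qed

end
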